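(* For every $T\in\mathrm{SSYT}_n$, \[ \mathsf P(\mathsf D(T))=\Phi_T(Y)\cdot\varphi_T(Y). \]
   Context: $\mathrm{SSYT}_n$: semistandard Young tableaux with entries in $[n]$, identified with their column sequences $(C_1,\dots,C_\ell)$, $C_j$ the set of entries of column $j$, $T_{ij}$ the entry in row $i$, column $j$. For cells $(i,j),(i,j+1)$ both in $T$, $\mathrm{Leg}^+_T(i,j)=C_j\cap\{T_{ij},\dots,T_{i,j+1}\}$ if $T_{i,j+1}\notin C_j$, else $\varnothing$; $\Phi_T(Y)=\prod_{\mathrm{Leg}^+_T(i,j)\neq\varnothing}(1-Y^{\#\mathrm{Leg}^+_T(i,j)})$. Dyck words: finite words in letters $\mathbf 0,\mathbf 1$ with equally many of each and no prefix containing more $\mathbf 1$s than $\mathbf 0$s. For a two-column tableau $(C_1,C_2)$ put $\bar C_1=C_1\setminus C_2$, $\bar C_2=C_2\setminus C_1$, $a=\#\bar C_1\ge b=\#\bar C_2$; $\mathsf D((C_1,C_2))$ is obtained by listing the elements of $\bar C_1\cup\bar C_2$ in increasing order, replacing each element of $\bar C_1$ by $\mathbf 0$ and each element of $\bar C_2$ by $\mathbf 1$, and appending $a-b$ further letters $\mathbf 1$. For $T=(C_1,\dots,C_\ell)$, $\mathsf D(T)$ is the concatenation $\mathsf D((C_1,C_2))\mathsf D((C_2,C_3))\cdots\mathsf D((C_{\ell-1},C_\ell))$ (empty if $\ell\le1$). Write $[\![0]\!]=1$, $[\![m]\!]=1-Y^m$ and $[\![m]\!]!=\prod_{j=1}^m[\![j]\!]$.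 A Dyck word is uniquely $w=\mathbf 0^{\ell_1}\mathbf 1^{m_1}\cdots\mathbf 0^{\ell_r}\mathbf 1^{m_r}$ with $r\ge0$, $\ell_i,m_i\ge1$; set $b_k=\sum_{i\le k}(\ell_i-m_i)$ and $t_k=m_k+b_k$, and $\mathsf P(w)=\prod_{k=1}^r\frac{[\![t_k]\!]!}{[\![b_k]\!]!}\in\mathbb Z[Y]$. The phantom factor is $\varphi_T(Y)=\prod_{s=1}^{\ell-1}[\![\#C_s-\#C_{s+1}]\!]!$. *)

theory Defs
  imports "HOL-Computational_Algebra.Polynomial"
begin

text \<open>A tableau is the list of its column sets (C_1,...,C_l), each a finite set of naturals.
  Rows are indexed from 0: entry C i is the (i+1)-st smallest element of C.\<close>

definition entry :: "nat set \<Rightarrow> nat \<Rightarrow> nat" where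
  "entry C i = sorted_list_of_set C ! i"

definition SSYT :: "nat \<Rightarrow> nat set list \<Rightarrow> bool" where
  "SSYT n T \<longleftrightarrow>
     (\<forall>C\<in>set T. C \<noteq> {} \<and> C \<subseteq> {1..n}) \<and>
     (\<forall>j. Suc j < length T \<longrightarrow>
        card (T ! Suc j) \<le> card (T ! j) \<and>
        (\<forall>i < card (T ! Suc j). entry (T ! j) i \<le> entry (T ! Suc j) i))"

definition LegPlus :: "nat set list \<Rightarrow> nat \<Rightarrow> nat \<Rightarrow> nat set" where
  "LegPlus T i j =
     (if entry (T ! Suc j) i \<notin> T ! j
      then T ! j \<inter> {entry (T ! j) i .. entry (T ! Suc j) i} else {})"

definition qint :: "nat \<Rightarrow> int poly" where
  "qint m = 1 - [:0, 1:] ^ m"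

definition qfact :: "nat \<Rightarrow> int poly" where
  "qfact m = (\<Prod>j\<in>{1..m}. qint j)"

definition Phi :: "nat set list \<Rightarrow> int poly" where
  "Phi T = (\<Prod>(i,j)\<in>{(i,j). Suc j < length T \<and> i < card (T ! Suc j) \<and> LegPlus T i j \<noteq> {}}.
              qint (card (LegPlus T i j)))"

definition phantom :: "nat set list \<Rightarrow> int poly" where
  "phantom T = (\<Prod>s<length T - 1. qfact (card (T ! s) - card (T ! Suc s)))"

datatype letter = L0 | L1

definition D2 :: "nat set \<Rightarrow> nat set \<Rightarrow> letter list" where
  "D2 C1 C2 =
     (let B1 = C1 - C2; B2 = C2 - C1 in
      map (\<lambda>x. if x \<in> B1 then L0 else L1) (sorted_list_of_set (B1 \<union> B2))
      @ replicate (card B1 - card B2) L1)"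

fun D :: "nat set list \<Rightarrow> letter list" where
  "D (C1 # C2 # Cs) = D2 C1 C2 @ D (C2 # Cs)"
| "D _ = []"

function blocks :: "letter list \<Rightarrow> (nat \<times> nat) list" where
  "blocks w =
     (if w = [] then []
      else (let l = length (takeWhile (\<lambda>x. x = L0) w);
                w' = dropWhile (\<lambda>x. x = L0) w;
                m = length (takeWhile (\<lambda>x. x = L1) w');
                w'' = dropWhile (\<lambda>x. x = L1) w'
            in (l, m) # blocks w''))"
  by pat_completeness auto
termination
proof (relation "measure length")
  fix w :: "letter list" and l w' m w''
  assume "w \<noteq> []" and w': "w' = dropWhile (\<lambda>x. x = L0) w"
     and w'': "w'' = dropWhile (\<lambda>x. x = L1) w'"
  show "(w'', w) \<in> measure length"
  proof (cases w)
    case Nil with \<open>w \<noteq> []\<close> show ?thesis by simp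
  next
    case (Cons a u)
    have le1: "length w' \<le> length w" using w' by (simp add: length_dropWhile_le)
    have le2: "length w'' \<le> length w'" using w'' by (simp add: length_dropWhile_le)
    show ?thesis
    proof (cases a)
      case L0
      hence "length w' < length w" using w' Cons
        by (simp add: le_imp_less_Suc length_dropWhile_le)
      thus ?thesis using le2 by simp
    next
      case L1
      hence "w' = w" using w' Cons by simp
      hence "length w'' < length w'" using w'' Cons L1
        by (simp add: le_imp_less_Suc length_dropWhile_le)
      thus ?thesis using \<open>w' = w\<close> by simp
    qed
  qed
qed simp

definition P :: "letter list \<Rightarrow> int poly" where
  "P w = (let bl = blocks w;
              b = (\<lambda>k. \<Sum>i\<le>k. int (fst (bl ! i)) - int (snd (bl ! i)));
              t = (\<lambda>k. int (snd (bl ! k)) + b k)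
          in \<Prod>k<length bl. qfact (nat (t k)) div qfact (nat (b k)))"

end

theory Submission
  imports Defs
begin

text \<open>Read a word as a lattice path, \<open>\<zero>\<close> an up-step and \<open>\<one>\<close> a down-step, and give a
  down-step leaving height \<open>h\<close> the weight \<open>[[h]]\<close>. The weight is multiplicative under
  concatenation. On a Dyck word each maximal run of \<open>m\<close> down-steps descends from \<open>t\<^sub>k\<close> to
  \<open>b\<^sub>k\<close> and contributes \<open>[[t\<^sub>k]]!/[[b\<^sub>k]]!\<close>, so the weight is \<open>P(w)\<close>. The word
  \<open>D(T)\<close> is the concatenation of the two-column words, each of which returns to height 0.
  In the two-column word of \<open>(A, B)\<close>, the down-step of \<open>x = T\<^sub>i\<^sub>,\<^sub>j\<^sub>+\<^sub>1 \<in> B - A\<close> leaves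
  height \<open>#{y \<in> A - B. y < x} - #{y \<in> B - A. y < x} = #{y \<in> A. y < x} - i = #Leg\<^sup>+(i,j)\<close>,
  and the trailing \<open>\<one>\<^sup>a\<^sup>-\<^sup>b\<close> descends from \<open>a - b\<close> to 0, contributing \<open>[[a - b]]!\<close>.\<close>

lemma qint_nonzero: "0 < k \<Longrightarrow> qint k \<noteq> 0"
proof
  assume "0 < k" "qint k = 0"
  hence "poly (qint k) 0 = 0" by simp
  thus False using \<open>0 < k\<close> by (simp add: qint_def power_0_left)
qed

lemma qint_0 [simp]: "qint 0 = 0"
  by (simp add: qint_def)

lemma qfact_Suc: "qfact (Suc k) = qint (Suc k) * qfact k"
  by (simp add: qfact_def atLeastAtMostSuc_conv)

lemma qfact_nonzero: "qfact k \<noteq> 0"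
  unfolding qfact_def by (auto simp: qint_nonzero)

section \<open>Weighted lattice paths\<close>

text \<open>For \<open>h \<le> 0\<close> the factor is \<open>qint 0 = 0\<close>: a path dipping below height 0 has weight 0.\<close>

fun walk_weight :: "int \<Rightarrow> letter list \<Rightarrow> int poly" where
  "walk_weight h [] = 1"
| "walk_weight h (L0 # w) = walk_weight (h + 1) w"
| "walk_weight h (L1 # w) = qint (nat h) * walk_weight (h - 1) w"

fun walk_height :: "letter list \<Rightarrow> int" where
  "walk_height [] = 0"
| "walk_height (L0 # w) = walk_height w + 1"
| "walk_height (L1 # w) = walk_height w - 1"

lemma walk_height_append [simp]: "walk_height (xs @ ys) = walk_height xs + walk_height ys"
  by (induction xs rule: walk_height.induct) auto

lemma walk_weight_append:
  "walk_weight h (xs @ ys) = walk_weight h xs * walk_weight (h + walk_height xs) ys"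
  by (induction h xs rule: walk_weight.induct) (auto simp: algebra_simps)

lemma walk_weight_replicate_L0 [simp]: "walk_weight h (replicate l L0) = 1"
  by (induction l arbitrary: h) auto

lemma walk_height_replicate_L0 [simp]: "walk_height (replicate l L0) = int l"
  by (induction l) auto

lemma walk_height_replicate_L1 [simp]: "walk_height (replicate l L1) = - int l"
  by (induction l) auto

lemma walk_weight_descent:
  "m \<le> N \<Longrightarrow> walk_weight (int N) (replicate m L1) * qfact (N - m) = qfact N"
proof (induction m arbitrary: N)
  case 0
  then show ?case by simp
next
  case (Suc m)
  then obtain N' where N: "N = Suc N'" by (cases N) auto
  have "nat (int N) = N" "int N - 1 = int N'" using N by auto
  then have "walk_weight (int N) (replicate (Suc m) L1) * qfact (N - Suc m)
      = qint N * (walk_weight (int N') (replicate m L1) * qfact (N' - m))"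
    using N by simp
  also have "\<dots> = qfact N"
    using Suc N by (simp add: qfact_Suc)
  finally show ?case .
qed

lemma walk_weight_descent_to_0: "walk_weight (int k) (replicate k L1) = qfact k"
  using walk_weight_descent[of k k] by (simp add: qfact_def)

lemma walk_weight_descent_below_0:
  "0 \<le> h \<Longrightarrow> h < int m \<Longrightarrow> walk_weight h (replicate m L1) = 0"
proof (induction m arbitrary: h)
  case (Suc m)
  then show ?case by (cases "h = 0") auto
qed simp

lemma walk_weight_descent_eq_div:
  assumes "int m \<le> h"
  shows "walk_weight h (replicate m L1) = qfact (nat h) div qfact (nat (h - int m))"
proof -
  have "walk_weight (int (nat h)) (replicate m L1) * qfact (nat h - m) = qfact (nat h)"
    using assms by (intro walk_weight_descent) auto
  moreover have "int (nat h) = h" "nat (h - int m) = nat h - m" using assms by auto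
  ultimately show ?thesis
    by (metis qfact_nonzero nonzero_mult_div_cancel_right)
qed

section \<open>The run decomposition\<close>

text \<open>\<^const>\<open>P\<close> with all heights shifted by a starting height \<open>h\<close>.\<close>

definition block_weight :: "int \<Rightarrow> (nat \<times> nat) list \<Rightarrow> int poly" where
  "block_weight h bl =
     (let b = (\<lambda>k. \<Sum>i\<le>k. int (fst (bl ! i)) - int (snd (bl ! i)));
          t = (\<lambda>k. int (snd (bl ! k)) + b k)
      in \<Prod>k<length bl. qfact (nat (h + t k)) div qfact (nat (h + b k)))"

declare blocks.simps [simp del]

lemma P_eq_block_weight: "P w = block_weight 0 (blocks w)"
  unfolding P_def block_weight_def Let_def by simp

lemma block_weight_Nil [simp]: "block_weight h [] = 1"
  by (simp add: block_weight_def)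

lemma block_weight_Cons:
  "block_weight h ((l, m) # bl) =
     qfact (nat (h + int l)) div qfact (nat (h + int l - int m)) *
     block_weight (h + int l - int m) bl"
proof -
  have shift: "(\<Sum>i\<le>Suc k. int (fst (((l, m) # bl) ! i)) - int (snd (((l, m) # bl) ! i)))
      = int l - int m + (\<Sum>i\<le>k. int (fst (bl ! i)) - int (snd (bl ! i)))" for k
    by (subst sum.atMost_Suc_shift) simp
  show ?thesis
    unfolding block_weight_def Let_def length_Cons
    by (subst prod.lessThan_Suc_shift)
      (simp add: shift algebra_simps del: sum.atMost_Suc prod.lessThan_Suc)
qed

lemma blocks_decomposition:
  assumes "w \<noteq> []"
  obtains l m w' where "blocks w = (l, m) # blocks w'"
    and "w = replicate l L0 @ replicate m L1 @ w'" and "length w' < length w"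
proof -
  define l where "l = length (takeWhile (\<lambda>x. x = L0) w)"
  define u where "u = dropWhile (\<lambda>x. x = L0) w"
  define m where "m = length (takeWhile (\<lambda>x. x = L1) u)"
  define w' where "w' = dropWhile (\<lambda>x. x = L1) u"
  have "blocks w = (l, m) # blocks w'"
    using assms unfolding l_def u_def m_def w'_def
    by (subst blocks.simps) (simp add: Let_def)
  moreover have "takeWhile (\<lambda>x. x = L0) w = replicate l L0"
    unfolding l_def by (metis (mono_tags) replicate_length_same set_takeWhileD)
  moreover have "takeWhile (\<lambda>x. x = L1) u = replicate m L1"
    unfolding m_def by (metis (mono_tags) replicate_length_same set_takeWhileD)
  moreover have "length w' < length w"
  proof -
    obtain a v where av: "w = a # v" using assms by (cases w) auto
    have "length w' \<le> length v"
    proof (cases a)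
      case L0
      then have "u = dropWhile (\<lambda>x. x = L0) v" using av by (simp add: u_def)
      then show ?thesis
        unfolding w'_def by (metis length_dropWhile_le order_trans)
    next
      case L1
      then show ?thesis
        using av unfolding w'_def u_def by (simp add: length_dropWhile_le)
    qed
    then show ?thesis using av by simp
  qed
  ultimately show ?thesis
    using that unfolding u_def w'_def by (metis takeWhile_dropWhile_id)
qed

lemma walk_weight_eq_block_weight:
  "0 \<le> h \<Longrightarrow> walk_weight h w \<noteq> 0 \<Longrightarrow> walk_weight h w = block_weight h (blocks w)"
proof (induction "length w" arbitrary: h w rule: less_induct)
  case less
  show ?case
  proof (cases "w = []")
    case True
    then show ?thesis by (simp add: blocks.simps)
  next
    case False
    then obtain l m w' where bl: "blocks w = (l, m) # blocks w'"
      and w: "w = replicate l L0 @ replicate m L1 @ w'" and shorter: "length w' < length w"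
      by (rule blocks_decomposition)
    have split: "walk_weight h w =
        walk_weight (h + int l) (replicate m L1) * walk_weight (h + int l - int m) w'"
      by (simp add: w walk_weight_append)
    have descent_nonzero: "walk_weight (h + int l) (replicate m L1) \<noteq> 0"
      and rest_nonzero: "walk_weight (h + int l - int m) w' \<noteq> 0"
      using less.prems(2) split by auto
    have m_le: "int m \<le> h + int l"
      using descent_nonzero walk_weight_descent_below_0[of "h + int l" m] less.prems(1) by force
    have "walk_weight (h + int l - int m) w' = block_weight (h + int l - int m) (blocks w')"
      using less.hyps shorter m_le rest_nonzero by simp
    then show ?thesis
      using split m_le by (simp add: bl block_weight_Cons walk_weight_descent_eq_div)
  qed
qed

section \<open>Marked words\<close>

definition marked_word :: "nat set \<Rightarrow> nat set \<Rightarrow> letter list" where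
  "marked_word X S = map (\<lambda>x. if x \<in> X then L0 else L1) (sorted_list_of_set S)"

lemma sorted_list_of_set_insert_greater:
  assumes "finite A" "\<forall>a\<in>A. a < b"
  shows "sorted_list_of_set (insert b A) = sorted_list_of_set A @ [b]"
proof -
  have "sorted_list_of_set (insert b A) = insort b (sorted_list_of_set A)"
    using assms by auto
  also have "\<dots> = sorted_list_of_set A @ [b]"
    using assms by (intro sorted_insort_is_snoc) (auto simp: less_imp_le)
  finally show ?thesis .
qed

lemma marked_word_insert_greater:
  assumes "finite S" "\<forall>x\<in>S. x < b"
  shows "marked_word X (insert b S) = marked_word X S @ [if b \<in> X then L0 else L1]"
  unfolding marked_word_def sorted_list_of_set_insert_greater[OF assms] by simp

lemma walk_height_marked_word:
  "finite S \<Longrightarrow> walk_height (marked_word X S) = int (card (S \<inter> X)) - int (card (S - X))"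
proof (induction S rule: finite_linorder_max_induct)
  case empty
  then show ?case by (simp add: marked_word_def)
next
  case (insert b A)
  have "b \<notin> A" "finite (A \<inter> X)" "finite (A - X)" using insert by auto
  then show ?case
    using insert by (auto simp: marked_word_insert_greater insert_Diff_if)
qed

lemma walk_weight_marked_word:
  "finite S \<Longrightarrow> walk_weight 0 (marked_word X S) =
     (\<Prod>x\<in>S - X. qint (card {y\<in>S \<inter> X. y < x} - card {y\<in>S - X. y < x}))"
proof (induction S rule: finite_linorder_max_induct)
  case empty
  then show ?case by (simp add: marked_word_def)
next
  case (insert b A)
  let ?f = "\<lambda>S x. qint (card {y\<in>S \<inter> X. y < x} - card {y\<in>S - X. y < x})"
  have "b \<notin> A" using insert by auto
  have below_b: "?f (insert b A) x = ?f A x" if "x \<in> A" for x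
  proof -
    have "{y\<in>insert b A \<inter> X. y < x} = {y\<in>A \<inter> X. y < x}"
         "{y\<in>insert b A - X. y < x} = {y\<in>A - X. y < x}"
      using that insert.hyps(2) by auto
    then show ?thesis by simp
  qed
  have word: "marked_word X (insert b A) = marked_word X A @ [if b \<in> X then L0 else L1]"
    using insert.hyps by (rule marked_word_insert_greater)
  show ?case
  proof (cases "b \<in> X")
    case True
    then have "insert b A - X = A - X" by auto
    then show ?thesis
      using True insert.IH below_b by (simp add: word walk_weight_append)
  next
    case False
    have at_b: "?f (insert b A) b = qint (nat (walk_height (marked_word X A)))"
    proof -
      have "{y\<in>insert b A \<inter> X. y < b} = A \<inter> X" "{y\<in>insert b A - X. y < b} = A - X"
        using insert.hyps(2) by auto
      moreover have "nat (int (card (A \<inter> X)) - int (card (A - X))) = card (A \<inter> X) - card (A - X)"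
        by simp
      ultimately show ?thesis
        using insert.hyps(1) by (simp add: walk_height_marked_word)
    qed
    have "(\<Prod>x\<in>insert b A - X. ?f (insert b A) x) = ?f (insert b A) b * (\<Prod>x\<in>A - X. ?f A x)"
      using False \<open>b \<notin> A\<close> insert.hyps(1) below_b by (simp add: insert_Diff_if)
    then show ?thesis
      using False insert.IH at_b by (simp add: word walk_weight_append mult.commute)
  qed
qed

lemma bij_betw_entry:
  assumes "finite A"
  shows "bij_betw (entry A) {..<card A} A"
proof -
  have "entry A = (!) (sorted_list_of_set A)"
    by (rule ext) (simp add: entry_def)
  then show ?thesis
    using assms by (auto intro: bij_betw_nth)
qed

lemma entry_in: "finite A \<Longrightarrow> i < card A \<Longrightarrow> entry A i \<in> A"
  using bij_betw_entry[of A] by (auto simp: bij_betw_def)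

lemma entry_strict_mono: "finite A \<Longrightarrow> i < j \<Longrightarrow> j < card A \<Longrightarrow> entry A i < entry A j"
  unfolding entry_def
  by (rule sorted_wrt_nth_less[where P="(<)"]) auto

lemma card_less_entry:
  assumes "finite A" "i < card A"
  shows "card {y\<in>A. y < entry A i} = i"
proof -
  have bij: "bij_betw (entry A) {..<card A} A"
    using assms(1) by (rule bij_betw_entry)
  have "{y\<in>A. y < entry A i} = entry A ` {..<i}"
  proof
    show "entry A ` {..<i} \<subseteq> {y\<in>A. y < entry A i}"
      using assms by (auto intro: entry_in entry_strict_mono)
    show "{y\<in>A. y < entry A i} \<subseteq> entry A ` {..<i}"
    proof
      fix y assume y: "y \<in> {y\<in>A. y < entry A i}"
      then obtain k where k: "k < card A" "y = entry A k"
        using bij by (auto simp: bij_betw_def)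
      have "k < i"
      proof (rule ccontr)
        assume "\<not> k < i"
        then have "k = i \<or> i < k" by auto
        then show False using entry_strict_mono[OF assms(1), of i k] k y by auto
      qed
      then show "y \<in> entry A ` {..<i}" using k by auto
    qed
  qed
  moreover have "inj_on (entry A) {..<i}"
    using bij assms by (auto simp: bij_betw_def intro: inj_on_subset)
  ultimately show ?thesis by (simp add: card_image)
qed

section \<open>Two adjacent columns\<close>

definition column_pair :: "nat set \<Rightarrow> nat set \<Rightarrow> bool" where
  "column_pair A B \<longleftrightarrow>
     finite A \<and> finite B \<and> card B \<le> card A \<and> (\<forall>i<card B. entry A i \<le> entry B i)"

definition leg_plus :: "nat set \<Rightarrow> nat set \<Rightarrow> nat \<Rightarrow> nat set" where
  "leg_plus A B i = (if entry B i \<notin> A then A \<inter> {entry A i .. entry B i} else {})"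

definition Phi_pair :: "nat set \<Rightarrow> nat set \<Rightarrow> int poly" where
  "Phi_pair A B = (\<Prod>i\<in>{i. i < card B \<and> leg_plus A B i \<noteq> {}}. qint (card (leg_plus A B i)))"

lemma Phi_pair_nonzero: "finite A \<Longrightarrow> Phi_pair A B \<noteq> 0"
  unfolding Phi_pair_def leg_plus_def
  by (subst prod_zero_iff) (auto simp: qint_nonzero card_gt_0_iff)

lemma card_leg_plus:
  assumes "column_pair A B" "i < card B" "entry B i \<notin> A"
  shows "card (leg_plus A B i) =
    card {y\<in>A - B. y < entry B i} - card {y\<in>B - A. y < entry B i}"
proof -
  define x where "x = entry B i"
  have fin: "finite A" "finite B" and i_A: "i < card A" and a_le_x: "entry A i \<le> x"
    using assms unfolding column_pair_def x_def by auto
  have leg: "leg_plus A B i = {y\<in>A. entry A i \<le> y \<and> y < x}"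
    using assms(3) a_le_x unfolding leg_plus_def x_def by (auto simp: order.order_iff_strict)
  have split: "{y\<in>A. y < x} = {y\<in>A. y < entry A i} \<union> leg_plus A B i"
    using a_le_x unfolding leg by auto
  have "card {y\<in>A. y < x} = card {y\<in>A. y < entry A i} + card (leg_plus A B i)"
    by (subst split, rule card_Un_disjoint) (use fin(1) in \<open>auto simp: leg\<close>)
  then have A_below: "card {y\<in>A. y < x} = i + card (leg_plus A B i)"
    using card_less_entry[OF fin(1) i_A] by simp
  have B_below: "card {y\<in>B. y < x} = i"
    unfolding x_def using card_less_entry[OF fin(2) assms(2)] .
  have split_below: "card {y\<in>S. y < x} = card {y\<in>S - R. y < x} + card {y\<in>S \<inter> R. y < x}"
    if "finite S" for S R :: "nat set"
  proof -
    have parts: "{y\<in>S. y < x} = {y\<in>S - R. y < x} \<union> {y\<in>S \<inter> R. y < x}" by auto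
    show ?thesis
      by (subst parts, rule card_Un_disjoint) (use that in auto)
  qed
  have "card {y\<in>A. y < x} = card {y\<in>A - B. y < x} + card {y\<in>A \<inter> B. y < x}"
       "card {y\<in>B. y < x} = card {y\<in>B - A. y < x} + card {y\<in>A \<inter> B. y < x}"
    using split_below[OF fin(1), of B] split_below[OF fin(2), of A] by (simp_all add: Int_commute)
  then show ?thesis
    using A_below B_below unfolding x_def by linarith
qed

text \<open>The rows \<open>i\<close> with nonempty \<open>Leg\<^sup>+\<close> are reindexed by their entries \<open>entry B i\<close>,
  which are exactly the elements of \<open>B - A\<close>.\<close>

lemma Phi_pair_eq:
  assumes "column_pair A B"
  shows "Phi_pair A B = (\<Prod>x\<in>B - A. qint (card {y\<in>A - B. y < x} - card {y\<in>B - A. y < x}))"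
proof -
  have fin: "finite A" "finite B"
    using assms unfolding column_pair_def by auto
  let ?I = "{i. i < card B \<and> leg_plus A B i \<noteq> {}}"
  have rows: "?I = {i. i < card B \<and> entry B i \<notin> A}"
  proof (intro Collect_cong conj_cong refl)
    fix i assume "i < card B"
    then have "entry A i \<in> A" "entry A i \<le> entry B i"
      using assms entry_in[OF fin(1)] unfolding column_pair_def by auto
    then show "leg_plus A B i \<noteq> {} \<longleftrightarrow> entry B i \<notin> A"
      by (auto simp: leg_plus_def)
  qed
  have bij: "bij_betw (entry B) {..<card B} B"
    using fin(2) by (rule bij_betw_entry)
  then have inj: "inj_on (entry B) ?I"
    by (auto simp: bij_betw_def intro: inj_on_subset)
  have image: "B - A = entry B ` ?I"
  proof
    show "entry B ` ?I \<subseteq> B - A"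
      unfolding rows using entry_in[OF fin(2)] by auto
    show "B - A \<subseteq> entry B ` ?I"
    proof
      fix x assume x: "x \<in> B - A"
      then obtain i where "i < card B" "x = entry B i"
        using bij by (auto simp: bij_betw_def)
      then show "x \<in> entry B ` ?I" unfolding rows using x by auto
    qed
  qed
  show ?thesis
    unfolding Phi_pair_def
    by (rule sym, rule prod.reindex_cong[OF inj image]) (auto simp: rows card_leg_plus assms)
qed

lemma walk_D2:
  assumes "column_pair A B"
  shows "walk_height (D2 A B) = 0"
    and "walk_weight 0 (D2 A B) = Phi_pair A B * qfact (card A - card B)"
proof -
  have fin: "finite A" "finite B" and "card B \<le> card A"
    using assms unfolding column_pair_def by auto
  define S where "S = (A - B) \<union> (B - A)"
  have S: "finite S" "S \<inter> (A - B) = A - B" "S - (A - B) = B - A"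
    using fin unfolding S_def by auto
  define k where "k = card A - card B"
  have "card A = card (A \<inter> B) + card (A - B)" "card B = card (A \<inter> B) + card (B - A)"
    using card_Int_Diff[OF fin(1), of B] card_Int_Diff[OF fin(2), of A] by (simp_all add: Int_commute)
  then have k: "k = card (A - B) - card (B - A)" "int k = int (card (A - B)) - int (card (B - A))"
    using \<open>card B \<le> card A\<close> unfolding k_def by auto
  have word: "D2 A B = marked_word (A - B) S @ replicate k L1"
    unfolding D2_def marked_word_def Let_def S_def k(1) by simp
  have height: "walk_height (marked_word (A - B) S) = int k"
    using walk_height_marked_word[OF S(1)] k(2) by (simp add: S)
  then show "walk_height (D2 A B) = 0"
    by (simp add: word)
  have "walk_weight 0 (D2 A B) =
      walk_weight 0 (marked_word (A - B) S) * walk_weight (int k) (replicate k L1)"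
    by (simp add: word walk_weight_append height)
  also have "\<dots> = Phi_pair A B * qfact k"
    by (simp add: walk_weight_marked_word S walk_weight_descent_to_0 Phi_pair_eq[OF assms])
  finally show "walk_weight 0 (D2 A B) = Phi_pair A B * qfact (card A - card B)"
    by (simp add: k_def)
qed

lemma walk_weight_D:
  assumes "\<forall>j. Suc j < length T \<longrightarrow> column_pair (T ! j) (T ! Suc j)"
  shows "walk_weight 0 (D T) = (\<Prod>j<length T - 1. walk_weight 0 (D2 (T ! j) (T ! Suc j)))"
  using assms
proof (induction T rule: D.induct)
  case (1 C1 C2 Cs)
  have "column_pair C1 C2"
    using "1.prems" by force
  moreover have "walk_weight 0 (D (C2 # Cs)) =
      (\<Prod>j<length (C2 # Cs) - 1. walk_weight 0 (D2 ((C2 # Cs) ! j) ((C2 # Cs) ! Suc j)))"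
    using "1.prems" by (intro "1.IH") (auto dest: spec[of _ "Suc _"])
  ultimately show ?case
    by (simp add: walk_weight_append walk_D2 prod.lessThan_Suc_shift del: prod.lessThan_Suc)
qed auto

lemma Phi_eq_prod_Phi_pair: "Phi T = (\<Prod>j<length T - 1. Phi_pair (T ! j) (T ! Suc j))"
proof -
  let ?S = "SIGMA j:{..<length T - 1}.
    {i. i < card (T ! Suc j) \<and> leg_plus (T ! j) (T ! Suc j) i \<noteq> {}}"
  have cells: "{(i, j). Suc j < length T \<and> i < card (T ! Suc j) \<and> LegPlus T i j \<noteq> {}}
      = (\<lambda>(j, i). (i, j)) ` ?S"
    by (auto simp: LegPlus_def leg_plus_def image_iff)
  have "inj_on (\<lambda>(j, i). (i :: nat, j :: nat)) ?S"
    by (auto simp: inj_on_def)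
  then have "Phi T = (\<Prod>(j, i)\<in>?S. qint (card (leg_plus (T ! j) (T ! Suc j) i)))"
    unfolding Phi_def cells by (subst prod.reindex) (auto simp: LegPlus_def leg_plus_def intro!: prod.cong)
  also have "\<dots> = (\<Prod>j<length T - 1. Phi_pair (T ! j) (T ! Suc j))"
    unfolding Phi_pair_def by (rule prod.Sigma[symmetric]) auto
  finally show ?thesis .
qed

theorem mainTheorem12:
  fixes n :: nat and T :: "nat set list"
  assumes "SSYT n T"
  shows "P (D T) = Phi T * phantom T"
proof -
  have pairs: "\<forall>j. Suc j < length T \<longrightarrow> column_pair (T ! j) (T ! Suc j)"
  proof (intro allI impI)
    fix j assume j: "Suc j < length T"
    then have "finite (T ! j)" "finite (T ! Suc j)"
      using assms unfolding SSYT_def by (meson finite_atLeastAtMost finite_subset nth_mem Suc_lessD)+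
    then show "column_pair (T ! j) (T ! Suc j)"
      using assms j unfolding SSYT_def column_pair_def by auto
  qed
  have weight: "walk_weight 0 (D T) =
      (\<Prod>j<length T - 1. Phi_pair (T ! j) (T ! Suc j) * qfact (card (T ! j) - card (T ! Suc j)))"
    unfolding walk_weight_D[OF pairs] using pairs by (intro prod.cong) (auto simp: walk_D2)
  moreover have "\<dots> \<noteq> 0"
    using pairs by (subst prod_zero_iff) (auto simp: Phi_pair_nonzero qfact_nonzero column_pair_def)
  ultimately have "P (D T) = walk_weight 0 (D T)"
    using walk_weight_eq_block_weight[of 0 "D T"] by (simp add: P_eq_block_weight)
  then show ?thesis
    unfolding weight Phi_eq_prod_Phi_pair phantom_def prod.distrib .
qed

end
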